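(* Let $n\ge0$. The space $\mathrm C^n(K,\mathcal D)^S$ is nontrivial (different from $\{0\}$) if and only if there exist an $n$-simplex $y\in\Sigma_n(K)$ and a nonzero function $f_0\in\mathcal D_{|y|}$ such that $f_0\circ s^{-1}=f_0$ for every $s$ in the stabilizer $S_y=\{s\in S:s(y)=y\}$.
   Context: $X$ is a spacetime, $S$ a group of conformal diffeomorphisms of $X$, and $K$ a base of the topology of $X$ consisting of open relatively compact subsets, globally invariant under $S$ ($s(o)\in K$ for $o\in K$, $s\in S$), ordered by inclusion. Simplices: $\Sigma_0(K)=K$; for $n\ge1$ an $n$-simplex is $x=(|x|;\partial_0x,\dots,\partial_nx)$ with $|x|\in K$, $\partial_ix\in\Sigma_{n-1}(K)$, $|\partial_ix|\subseteq|x|$ (for $n=1$, $|\partial_ix|=\partial_ix$), and, for $n\ge2$, $\partial_i\partial_jx=\partial_j\partial_{i+1}x$ for $i\ge j$. $S$ acts on simplices by applying $s$ to the support and recursively to the faces. $\mathcal D(X)$ is the space of real-valued compactly supported smooth functions on $X$ and, for $a\in K$, $\mathcal D_a$ is the subspace of functions vanishing outside the closure of $a$. $\mathrm C^n(K,\mathcal D)$ is the vector space of maps $f:\Sigma_n(K)\ni x\mapsto f_x\in\mathcal D_{|x|}$, with $S$-action $(sf)_x:=f_{s(x)}\circ s$, and $\mathrm C^n(K,\mathcal D)^S=\{f:(sf)_x=f_x\ \forall x,\ \forall s\in S\}$. *)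

theory Defs
  imports "HOL-Analysis.Analysis"
begin

text \<open>Simplices over a family K of open sets. A ksimplex is a support together with
  its list of faces; a 0-simplex u is represented as Simp u [].\<close>

datatype 'u ksimplex = Simp 'u "'u ksimplex list"

fun supp :: "'u ksimplex \<Rightarrow> 'u" where
  "supp (Simp u fs) = u"

fun face :: "nat \<Rightarrow> 'u ksimplex \<Rightarrow> 'u ksimplex" where
  "face i (Simp u fs) = fs ! i"

fun nfaces :: "'u ksimplex \<Rightarrow> nat" where
  "nfaces (Simp u fs) = length fs"

fun Sigma :: "'a set set \<Rightarrow> nat \<Rightarrow> 'a set ksimplex set" where
  "Sigma K 0 = {Simp u [] | u. u \<in> K}"
| "Sigma K (Suc n) =
     {x. supp x \<in> K \<and> nfaces x = n + 2 \<and>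
         (\<forall>i\<le>Suc n. face i x \<in> Sigma K n \<and> supp (face i x) \<subseteq> supp x) \<and>
         (n \<ge> 1 \<longrightarrow> (\<forall>i j. j \<le> i \<and> i \<le> n \<longrightarrow>
              face i (face j x) = face j (face (Suc i) x)))}"

definition act :: "('a \<Rightarrow> 'a) \<Rightarrow> 'a set ksimplex \<Rightarrow> 'a set ksimplex" where
  "act s x = map_ksimplex (\<lambda>u. s ` u) x"

definition Dsub :: "('a::topological_space \<Rightarrow> real) set \<Rightarrow> 'a set \<Rightarrow> ('a \<Rightarrow> real) set" where
  "Dsub D a = {f \<in> D. \<forall>p. p \<notin> closure a \<longrightarrow> f p = 0}"

definition Cochains :: "('a::topological_space \<Rightarrow> real) set \<Rightarrow> 'a set set \<Rightarrow> nat
     \<Rightarrow> ('a set ksimplex \<Rightarrow> 'a \<Rightarrow> real) set" where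
  "Cochains D K n = {f. (\<forall>x \<in> Sigma K n. f x \<in> Dsub D (supp x)) \<and>
                        (\<forall>x. x \<notin> Sigma K n \<longrightarrow> f x = (\<lambda>_. 0))}"

definition InvCochains :: "('a::topological_space \<Rightarrow> real) set \<Rightarrow> 'a set set \<Rightarrow> ('a \<Rightarrow> 'a) set
     \<Rightarrow> nat \<Rightarrow> ('a set ksimplex \<Rightarrow> 'a \<Rightarrow> real) set" where
  "InvCochains D K S n = {f \<in> Cochains D K n.
      \<forall>s \<in> S. \<forall>x \<in> Sigma K n. f (act s x) \<circ> s = f x}"

end

theory Submission
  imports Defs
begin

text \<open>An invariant cochain is determined on each S-orbit of simplices by its value at one
  representative y, and that value must be invariant under the stabilizer of y. Conversely,
  a stabilizer-invariant f0 \<in> D_{|y|} extends to the invariant cochain t(y) \<mapsto> f0 \<circ> t\<inverse> on the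
  orbit of y, extended by 0; it is well defined exactly because of the stabilizer invariance,
  and f0 \<circ> t\<inverse> vanishes outside the closure of t(|y|) since t is continuous.\<close>

lemma act_comp: "act (s \<circ> t) x = act s (act t x)"
  unfolding act_def by (simp add: ksimplex.map_comp o_def image_comp)

lemma act_id: "act id x = x"
  unfolding act_def by (simp add: ksimplex.map_id)

lemma supp_act: "supp (act s x) = s ` supp x"
  unfolding act_def by (cases x) simp

lemma nfaces_act: "nfaces (act s x) = nfaces x"
  unfolding act_def by (cases x) simp

lemma face_act: "i < nfaces x \<Longrightarrow> face i (act s x) = act s (face i x)"
  unfolding act_def by (cases x) simp

lemma nfaces_Sigma: "x \<in> Sigma K m \<Longrightarrow> m \<ge> 1 \<Longrightarrow> nfaces x = m + 1"
  by (cases m) auto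

lemma Sigma_act:
  assumes K_invariant: "\<forall>u \<in> K. s ` u \<in> K"
  shows "x \<in> Sigma K n \<Longrightarrow> act s x \<in> Sigma K n"
proof (induction n arbitrary: x)
  case 0
  then obtain u where "x = Simp u []" "u \<in> K" by auto
  then show ?case using K_invariant by (simp add: act_def)
next
  case (Suc n)
  have x: "supp x \<in> K" "nfaces x = n + 2"
    "\<And>i. i \<le> Suc n \<Longrightarrow> face i x \<in> Sigma K n \<and> supp (face i x) \<subseteq> supp x"
    "n \<ge> 1 \<Longrightarrow> (\<And>i j. j \<le> i \<Longrightarrow> i \<le> n \<Longrightarrow> face i (face j x) = face j (face (Suc i) x))"
    using Suc.prems by auto
  have face_act_x: "face i (act s x) = act s (face i x)" if "i \<le> Suc n" for i
    using that x(2) by (intro face_act) simp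
  show ?case
  proof (simp, intro conjI allI impI)
    show "supp (act s x) \<in> K" using x(1) K_invariant by (simp add: supp_act)
    show "nfaces (act s x) = Suc (Suc n)" using x(2) by (simp add: nfaces_act)
    fix i assume i: "i \<le> Suc n"
    show "face i (act s x) \<in> Sigma K n"
      using face_act_x[OF i] Suc.IH x(3)[OF i] by simp
    show "supp (face i (act s x)) \<subseteq> supp (act s x)"
      using face_act_x[OF i] x(3)[OF i] by (simp add: supp_act image_mono)
  next
    fix i j assume n: "Suc 0 \<le> n" and ji: "j \<le> i \<and> i \<le> n"
    have "face j x \<in> Sigma K n" "face (Suc i) x \<in> Sigma K n" using x(3) ji by auto
    then have nf: "nfaces (face j x) = n + 1" "nfaces (face (Suc i) x) = n + 1"
      using nfaces_Sigma n by auto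
    have "face i (face j (act s x)) = act s (face i (face j x))"
      using face_act_x nf ji by (simp add: face_act)
    also have "\<dots> = act s (face j (face (Suc i) x))" using x(4) n ji by simp
    also have "\<dots> = face j (face (Suc i) (act s x))"
      using face_act_x nf ji by (simp add: face_act)
    finally show "face i (face j (act s x)) = face j (face (Suc i) (act s x))" .
  qed
qed

definition stabilizer :: "('a \<Rightarrow> 'a) set \<Rightarrow> 'a set ksimplex \<Rightarrow> ('a \<Rightarrow> 'a) set" where
  "stabilizer S y = {s \<in> S. act s y = y}"

definition orbit :: "('a \<Rightarrow> 'a) set \<Rightarrow> 'a set ksimplex \<Rightarrow> 'a set ksimplex set" where
  "orbit S y = (\<lambda>t. act t y) ` S"

text \<open>The choice of the transporting t is irrelevant under stabilizer invariance
  (see transport_eq_on_orbit).\<close>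
definition induced_cochain ::
    "('a \<Rightarrow> 'a) set \<Rightarrow> 'a set ksimplex \<Rightarrow> ('a \<Rightarrow> real) \<Rightarrow> 'a set ksimplex \<Rightarrow> 'a \<Rightarrow> real" where
  "induced_cochain S y f0 x =
     (if x \<in> orbit S y then f0 \<circ> inv (SOME t. t \<in> S \<and> x = act t y) else (\<lambda>_. 0))"

lemma orbit_subset_Sigma:
  assumes "\<forall>s \<in> S. \<forall>u \<in> K. s ` u \<in> K" and "y \<in> Sigma K n"
  shows "orbit S y \<subseteq> Sigma K n"
  using assms Sigma_act unfolding orbit_def by blast

lemma InvCochains_nontrivial_iff:
  assumes "(\<lambda>_. 0) \<in> D"
  shows "InvCochains D K S n \<noteq> {\<lambda>_ _. 0} \<longleftrightarrow>
    (\<exists>f \<in> InvCochains D K S n. \<exists>x \<in> Sigma K n. f x \<noteq> (\<lambda>_. 0))"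
proof -
  have "(\<lambda>_ _. 0) \<in> InvCochains D K S n"
    using assms unfolding InvCochains_def Cochains_def Dsub_def by auto
  moreover have "f = (\<lambda>_ _. 0) \<longleftrightarrow> (\<forall>x \<in> Sigma K n. f x = (\<lambda>_. 0))"
    if "f \<in> InvCochains D K S n" for f
    using that unfolding InvCochains_def Cochains_def by fastforce
  ultimately show ?thesis by blast
qed

lemma homeomorphism_UNIV_imp_bij: "homeomorphism UNIV UNIV f g \<Longrightarrow> bij f"
  unfolding homeomorphism_def by (metis UNIV_I bij_betw_byWitness subsetI)

lemma InvCochains_value_stabilizer_invariant:
  assumes "f \<in> InvCochains D K S n" and "x \<in> Sigma K n" and "s \<in> stabilizer S x" and "bij s"
  shows "f x \<circ> inv s = f x"
proof -
  have "s \<in> S" "act s x = x" using assms(3) by (auto simp: stabilizer_def)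
  then have "f (act s x) \<circ> s = f x" using assms(1,2) unfolding InvCochains_def by blast
  then have "f x \<circ> s = f x" using \<open>act s x = x\<close> by simp
  then have "f x \<circ> (s \<circ> inv s) = f x \<circ> inv s" by (simp add: o_assoc)
  moreover have "s \<circ> inv s = id" using \<open>bij s\<close> bij_is_surj surj_iff by blast
  ultimately show ?thesis by simp
qed

lemma Dsub_comp_inv:
  assumes "continuous_on UNIV s" and "bij s" and "f \<in> Dsub D a" and "f \<circ> inv s \<in> D"
  shows "f \<circ> inv s \<in> Dsub D (s ` a)"
proof -
  have "s ` closure a \<subseteq> closure (s ` a)"
    using image_closure_subset[OF continuous_on_subset[OF assms(1) subset_UNIV] closed_closure
        closure_subset] .
  then have "inv s p \<notin> closure a" if "p \<notin> closure (s ` a)" for p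
    using that \<open>bij s\<close> by (metis bij_inv_eq_iff image_eqI subsetD)
  then show ?thesis using assms(3,4) unfolding Dsub_def by auto
qed

locale transformation_group =
  fixes S :: "('a \<Rightarrow> 'a) set"
  assumes bij: "s \<in> S \<Longrightarrow> bij s"
    and id_mem: "id \<in> S"
    and comp_mem: "s \<in> S \<Longrightarrow> t \<in> S \<Longrightarrow> s \<circ> t \<in> S"
    and inv_mem: "s \<in> S \<Longrightarrow> inv s \<in> S"
begin

lemma comp_inv_id: "s \<in> S \<Longrightarrow> s \<circ> inv s = id"
  by (metis bij bij_is_surj surj_iff)

lemma inv_comp_id: "s \<in> S \<Longrightarrow> inv s \<circ> s = id"
  by (metis bij bij_is_inj inj_iff)

lemma inv_comp: "s \<in> S \<Longrightarrow> t \<in> S \<Longrightarrow> inv (s \<circ> t) = inv t \<circ> inv s"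
  by (metis bij o_inv_distrib)

lemma act_inv_act: "s \<in> S \<Longrightarrow> act (inv s) (act s x) = x"
  by (simp add: act_comp[symmetric] inv_comp_id act_id)

lemma act_mem_orbit_iff:
  assumes "s \<in> S" shows "act s x \<in> orbit S y \<longleftrightarrow> x \<in> orbit S y"
proof
  assume "act s x \<in> orbit S y"
  then obtain t where "t \<in> S" "act s x = act t y" unfolding orbit_def by blast
  then have "x = act (inv s \<circ> t) y" using \<open>s \<in> S\<close> by (metis act_comp act_inv_act)
  then show "x \<in> orbit S y" using \<open>s \<in> S\<close> \<open>t \<in> S\<close> by (simp add: orbit_def comp_mem inv_mem)
next
  assume "x \<in> orbit S y"
  then obtain t where "t \<in> S" "x = act t y" unfolding orbit_def by blast
  then show "act s x \<in> orbit S y"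
    using \<open>s \<in> S\<close> by (simp add: orbit_def act_comp[symmetric] comp_mem)
qed

lemma transport_eq_on_orbit:
  assumes f0: "\<forall>s \<in> stabilizer S y. f0 \<circ> inv s = f0"
    and st: "s \<in> S" "t \<in> S" "act s y = act t y"
  shows "f0 \<circ> inv s = f0 \<circ> inv t"
proof -
  have "inv t \<circ> s \<in> stabilizer S y"
    using st by (simp add: stabilizer_def comp_mem inv_mem act_comp act_inv_act)
  then have "f0 \<circ> inv (inv t \<circ> s) = f0" using f0 by blast
  moreover have "inv (inv t \<circ> s) = inv s \<circ> t"
    using st bij by (simp add: inv_comp inv_mem inv_inv_eq)
  ultimately have "f0 \<circ> inv s \<circ> t \<circ> inv t = f0 \<circ> inv t" by (simp add: o_assoc)
  then show ?thesis using st(2) by (simp add: o_assoc[symmetric] comp_inv_id)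
qed

lemma induced_cochain_act:
  assumes "\<forall>s \<in> stabilizer S y. f0 \<circ> inv s = f0" and "t \<in> S"
  shows "induced_cochain S y f0 (act t y) = f0 \<circ> inv t"
proof -
  let ?u = "SOME u. u \<in> S \<and> act t y = act u y"
  have "?u \<in> S \<and> act t y = act ?u y" by (rule someI[of _ t]) (use \<open>t \<in> S\<close> in auto)
  then have "f0 \<circ> inv ?u = f0 \<circ> inv t"
    using transport_eq_on_orbit[OF assms(1)] \<open>t \<in> S\<close> by metis
  then show ?thesis using \<open>t \<in> S\<close> unfolding induced_cochain_def orbit_def by auto
qed

lemma induced_cochain_equivariant:
  assumes f0: "\<forall>s \<in> stabilizer S y. f0 \<circ> inv s = f0" and s: "s \<in> S"
  shows "induced_cochain S y f0 (act s x) \<circ> s = induced_cochain S y f0 x"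
proof (cases "x \<in> orbit S y")
  case True
  then obtain t where t: "t \<in> S" "x = act t y" unfolding orbit_def by blast
  have "act s x = act (s \<circ> t) y" using t(2) by (simp add: act_comp)
  then have "induced_cochain S y f0 (act s x) \<circ> s = f0 \<circ> inv (s \<circ> t) \<circ> s"
    using induced_cochain_act[OF f0 comp_mem[OF s t(1)]] by simp
  also have "\<dots> = f0 \<circ> inv t \<circ> (inv s \<circ> s)" using inv_comp[OF s t(1)] by (simp add: o_assoc)
  also have "\<dots> = induced_cochain S y f0 x"
    using inv_comp_id[OF s] induced_cochain_act[OF f0 t(1)] t(2) by simp
  finally show ?thesis .
next
  case False
  then show ?thesis using s by (simp add: induced_cochain_def act_mem_orbit_iff)
qed

end

lemma induced_cochain_InvCochains:
  assumes "transformation_group S"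
    and S_cont: "\<forall>s \<in> S. continuous_on UNIV s"
    and K_invariant: "\<forall>s \<in> S. \<forall>u \<in> K. s ` u \<in> K"
    and D_zero: "(\<lambda>_. 0) \<in> D"
    and D_invariant: "\<forall>s \<in> S. \<forall>f \<in> D. f \<circ> s \<in> D"
    and y: "y \<in> Sigma K n"
    and f0: "f0 \<in> Dsub D (supp y)" "\<forall>s \<in> stabilizer S y. f0 \<circ> inv s = f0"
  shows "induced_cochain S y f0 \<in> InvCochains D K S n"
proof -
  interpret transformation_group S by fact
  have on_orbit: "induced_cochain S y f0 x \<in> Dsub D (supp x)" if "x \<in> orbit S y" for x
  proof -
    obtain t where t: "t \<in> S" "x = act t y" using \<open>x \<in> orbit S y\<close> unfolding orbit_def by blast
    have "f0 \<circ> inv t \<in> D" using D_invariant inv_mem t(1) f0(1) unfolding Dsub_def by auto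
    with S_cont t(1) have "f0 \<circ> inv t \<in> Dsub D (t ` supp y)"
      by (intro Dsub_comp_inv bij f0(1)) auto
    then show ?thesis using t f0(2) by (simp add: induced_cochain_act supp_act)
  qed
  have off_orbit: "induced_cochain S y f0 x = (\<lambda>_. 0)" if "x \<notin> orbit S y" for x
    using that by (simp add: induced_cochain_def)
  have "(\<lambda>_. 0) \<in> Dsub D a" for a using D_zero by (simp add: Dsub_def)
  then have "induced_cochain S y f0 x \<in> Dsub D (supp x)" for x
    using on_orbit off_orbit by (cases "x \<in> orbit S y") auto
  then have "induced_cochain S y f0 \<in> Cochains D K n"
    using off_orbit orbit_subset_Sigma[OF K_invariant y] unfolding Cochains_def by auto
  then show ?thesis
    unfolding InvCochains_def using induced_cochain_equivariant[OF f0(2)] by blast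
qed

theorem proposition4p10:
  fixes S :: "('a::t2_space \<Rightarrow> 'a) set"
    and K :: "'a set set"
    and D :: "('a \<Rightarrow> real) set"
    and n :: nat
  assumes S_homeo: "\<forall>s \<in> S. homeomorphism UNIV UNIV s (inv s)"
    and S_id: "id \<in> S"
    and S_comp: "\<forall>s \<in> S. \<forall>t \<in> S. s \<circ> t \<in> S"
    and S_inv: "\<forall>s \<in> S. inv s \<in> S"
    and K_basis: "topological_basis K"
    and K_relcompact: "\<forall>u \<in> K. compact (closure u)"
    and K_invariant: "\<forall>s \<in> S. \<forall>u \<in> K. s ` u \<in> K"
    and D_fun: "\<forall>f \<in> D. continuous_on UNIV f \<and> compact (closure {p. f p \<noteq> 0})"
    and D_zero: "(\<lambda>_. 0) \<in> D"
    and D_add: "\<forall>f \<in> D. \<forall>g \<in> D. (\<lambda>p. f p + g p) \<in> D"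
    and D_scale: "\<forall>c::real. \<forall>f \<in> D. (\<lambda>p. c * f p) \<in> D"
    and D_invariant: "\<forall>s \<in> S. \<forall>f \<in> D. f \<circ> s \<in> D"
  shows "InvCochains D K S n \<noteq> {\<lambda>_ _. 0} \<longleftrightarrow>
         (\<exists>y \<in> Sigma K n. \<exists>f0 \<in> Dsub D (supp y). f0 \<noteq> (\<lambda>_. 0) \<and>
             (\<forall>s \<in> S. act s y = y \<longrightarrow> f0 \<circ> inv s = f0))"
proof -
  have S_cont: "\<forall>s \<in> S. continuous_on UNIV s" and S_bij: "\<And>s. s \<in> S \<Longrightarrow> bij s"
    using S_homeo homeomorphism_cont1 homeomorphism_UNIV_imp_bij by blast+
  have group: "transformation_group S"
    using S_bij S_id S_comp S_inv by unfold_locales auto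
  show ?thesis
    unfolding InvCochains_nontrivial_iff[OF D_zero]
  proof (intro iffI; elim bexE conjE)
    fix f x assume "f \<in> InvCochains D K S n" "x \<in> Sigma K n" "f x \<noteq> (\<lambda>_. 0)"
    moreover have "f x \<in> Dsub D (supp x)"
      using calculation unfolding InvCochains_def Cochains_def by blast
    ultimately show "\<exists>y \<in> Sigma K n. \<exists>f0 \<in> Dsub D (supp y). f0 \<noteq> (\<lambda>_. 0) \<and>
        (\<forall>s \<in> S. act s y = y \<longrightarrow> f0 \<circ> inv s = f0)"
      using InvCochains_value_stabilizer_invariant S_bij unfolding stabilizer_def by blast
  next
    fix y f0 assume y: "y \<in> Sigma K n" and f0: "f0 \<in> Dsub D (supp y)" "f0 \<noteq> (\<lambda>_. 0)"
      and "\<forall>s \<in> S. act s y = y \<longrightarrow> f0 \<circ> inv s = f0"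
    then have stab: "\<forall>s \<in> stabilizer S y. f0 \<circ> inv s = f0" by (simp add: stabilizer_def)
    have "induced_cochain S y f0 \<in> InvCochains D K S n"
      using induced_cochain_InvCochains[OF group S_cont K_invariant D_zero D_invariant y f0(1) stab] .
    moreover have "induced_cochain S y f0 y = f0"
      using transformation_group.induced_cochain_act[OF group stab S_id] by (simp add: act_id)
    ultimately show "\<exists>f \<in> InvCochains D K S n. \<exists>x \<in> Sigma K n. f x \<noteq> (\<lambda>_. 0)"
      using y f0(2) by (intro bexI[of _ "induced_cochain S y f0"] bexI[of _ y]) auto
  qed
qed

end
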